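(* For any LSBM $X_t=\tilde W_{T_t}$ (Brownian motion with drift $\beta$ time changed by an independent Lévy subordinator $T$) and any $x_0>0$, the sequence of stopping times $(t_i^*(x_0))_{i\ge1}$ converges almost surely to the first passage time $t^*=\inf\{t\ge0: X_t\le0\}$.
   Context: Setup (LSBM): $W$ standard Brownian motion, $\beta\in\mathbb{R}$, $\tilde W_S=x_0+W_S+\beta S$; $T$ a subordinator (nondecreasing Lévy process with drift $b\ge0$ and Lévy measure on $(0,\infty)$) independent of $W$; $X_t=\tilde W_{T_t}$. For $x\in\mathbb{R}$, $T^*(x)=\inf\{S\ge0:x+W_S+\beta S\le0\}$. $t_1^*(x_0)=\inf\{t\ge0:T_t\ge T^*(x_0)\}$. For $i\ge2$: if $t_{i-1}^*=\infty$ or $X_{t_{i-1}^*}\le0$ set $t_i^*=t_{i-1}^*$; otherwise $t_i^*=\inf\{t\ge t_{i-1}^*:T_t-T_{t_{i-1}^*}\ge\sigma_{i-1}\}$ with $\sigma_{i-1}=\inf\{S\ge0:\tilde W_{T_{t_{i-1}^*}+S}\le0\}$. All infima of empty sets are $+\infty$. *)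

theory Defs
  imports "HOL-Probability.Probability"
begin

definition std_brownian_motion :: "'a measure \<Rightarrow> (real \<Rightarrow> 'a \<Rightarrow> real) \<Rightarrow> bool" where
  "std_brownian_motion M W \<longleftrightarrow>
     prob_space M \<and>
     (\<forall>t\<ge>0. W t \<in> borel_measurable M) \<and>
     (\<forall>\<omega>\<in>space M. W 0 \<omega> = 0 \<and> continuous_on {0..} (\<lambda>t. W t \<omega>)) \<and>
     (\<forall>s t. 0 \<le> s \<longrightarrow> s < t \<longrightarrow>
        distributed M lborel (\<lambda>\<omega>. W t \<omega> - W s \<omega>) (\<lambda>x. ennreal (normal_density 0 (sqrt (t - s)) x))) \<and>
     (\<forall>(n::nat) (ts::nat \<Rightarrow> real). 0 \<le> ts 0 \<and> (\<forall>i<n. ts i \<le> ts (Suc i)) \<longrightarrow>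
        prob_space.indep_vars M (\<lambda>_. borel) (\<lambda>i \<omega>. W (ts (Suc i)) \<omega> - W (ts i) \<omega>) {..<n})"

definition subordinator :: "'a measure \<Rightarrow> (real \<Rightarrow> 'a \<Rightarrow> real) \<Rightarrow> bool" where
  "subordinator M T \<longleftrightarrow>
     prob_space M \<and>
     (\<forall>t\<ge>0. T t \<in> borel_measurable M) \<and>
     (\<forall>\<omega>\<in>space M. T 0 \<omega> = 0 \<and> mono_on {0..} (\<lambda>t. T t \<omega>) \<and>
        (\<forall>t\<ge>0. continuous (at_right t) (\<lambda>s. T s \<omega>))) \<and>
     (\<forall>s t. 0 \<le> s \<longrightarrow> s \<le> t \<longrightarrow>
        distr M borel (\<lambda>\<omega>. T t \<omega> - T s \<omega>) = distr M borel (T (t - s))) \<and>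
     (\<forall>(n::nat) (ts::nat \<Rightarrow> real). 0 \<le> ts 0 \<and> (\<forall>i<n. ts i \<le> ts (Suc i)) \<longrightarrow>
        prob_space.indep_vars M (\<lambda>_. borel) (\<lambda>i \<omega>. T (ts (Suc i)) \<omega> - T (ts i) \<omega>) {..<n})"

definition indep_processes :: "'a measure \<Rightarrow> (real \<Rightarrow> 'a \<Rightarrow> real) \<Rightarrow> (real \<Rightarrow> 'a \<Rightarrow> real) \<Rightarrow> bool" where
  "indep_processes M W T \<longleftrightarrow>
     prob_space.indep_var M
       (Pi\<^sub>M {0..} (\<lambda>_. borel)) (\<lambda>\<omega>. \<lambda>t\<in>{0..}. W t \<omega>)
       (Pi\<^sub>M {0..} (\<lambda>_. borel)) (\<lambda>\<omega>. \<lambda>t\<in>{0..}. T t \<omega>)"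

definition drifted_BM :: "(real \<Rightarrow> 'a \<Rightarrow> real) \<Rightarrow> real \<Rightarrow> real \<Rightarrow> 'a \<Rightarrow> real \<Rightarrow> real" where
  "drifted_BM W \<beta> x0 \<omega> S = x0 + W S \<omega> + \<beta> * S"

definition lsbm :: "(real \<Rightarrow> 'a \<Rightarrow> real) \<Rightarrow> (real \<Rightarrow> 'a \<Rightarrow> real) \<Rightarrow> real \<Rightarrow> real \<Rightarrow> 'a \<Rightarrow> real \<Rightarrow> real" where
  "lsbm W T \<beta> x0 \<omega> t = drifted_BM W \<beta> x0 \<omega> (T t \<omega>)"

definition Tstar :: "(real \<Rightarrow> 'a \<Rightarrow> real) \<Rightarrow> real \<Rightarrow> real \<Rightarrow> 'a \<Rightarrow> ereal" where
  "Tstar W \<beta> x \<omega> = Inf (ereal ` {S. 0 \<le> S \<and> x + W S \<omega> + \<beta> * S \<le> 0})"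

definition tstar_step :: "(real \<Rightarrow> 'a \<Rightarrow> real) \<Rightarrow> (real \<Rightarrow> 'a \<Rightarrow> real) \<Rightarrow> real \<Rightarrow> real \<Rightarrow> 'a \<Rightarrow> ereal \<Rightarrow> ereal" where
  "tstar_step W T \<beta> x0 \<omega> p =
     (if p = \<infinity> \<or> lsbm W T \<beta> x0 \<omega> (real_of_ereal p) \<le> 0 then p
      else (let q = real_of_ereal p;
                \<sigma> = Inf (ereal ` {S. 0 \<le> S \<and> drifted_BM W \<beta> x0 \<omega> (T q \<omega> + S) \<le> 0})
            in Inf (ereal ` {t. q \<le> t \<and> \<sigma> \<le> ereal (T t \<omega> - T q \<omega>)})))"

text \<open>tstar_seq W T beta x0 omega n is t_{n+1}^*(x0) (so index 0 is t_1^*).\<close>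
primrec tstar_seq :: "(real \<Rightarrow> 'a \<Rightarrow> real) \<Rightarrow> (real \<Rightarrow> 'a \<Rightarrow> real) \<Rightarrow> real \<Rightarrow> real \<Rightarrow> 'a \<Rightarrow> nat \<Rightarrow> ereal" where
  "tstar_seq W T \<beta> x0 \<omega> 0 =
     Inf (ereal ` {t. 0 \<le> t \<and> Tstar W \<beta> x0 \<omega> \<le> ereal (T t \<omega>)})"
| "tstar_seq W T \<beta> x0 \<omega> (Suc n) = tstar_step W T \<beta> x0 \<omega> (tstar_seq W T \<beta> x0 \<omega> n)"

definition first_passage :: "(real \<Rightarrow> 'a \<Rightarrow> real) \<Rightarrow> (real \<Rightarrow> 'a \<Rightarrow> real) \<Rightarrow> real \<Rightarrow> real \<Rightarrow> 'a \<Rightarrow> ereal" where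
  "first_passage W T \<beta> x0 \<omega> = Inf (ereal ` {t. 0 \<le> t \<and> lsbm W T \<beta> x0 \<omega> t \<le> 0})"

end

theory Submission
  imports Defs
begin

(* The argument is pathwise outside one null set.  Fix a drifted Brownian path f (continuous)
   and a subordinator path tau (nondecreasing, right-continuous, tau 0 = 0).
   The recursion is an increasing sequence bounded by t^*.  If it stops, it has found a
   zero of f o tau and equals t^* from then on.  Otherwise it increases to a limit l; between
   consecutive terms f has zeros at internal times squeezed towards Z = tau(l-), so f Z = 0.
   If tau is continuous at l this gives f (tau l) <= 0, hence t^* <= l.  If tau jumps at l,
   then Z is the supremum of the values of tau at rational times below a rational level r
   inside the jump; these countably many random times are functionals of T, hence independent
   of W, and a Brownian motion with drift started at x0 <> 0 vanishes at an independent
   nonnegative time with probability zero (Gaussian marginals and Fubini). *)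

text \<open>The recursion, stated for an arbitrary continuous path \<open>f\<close> in internal time and an
  arbitrary time change \<open>\<tau>\<close>.  \<open>first_zero f a\<close> is the time after \<open>a\<close> until \<open>f\<close> first
  becomes nonpositive (\<open>T\<^sup>*\<close> and \<open>\<sigma>\<close> of the paper); \<open>first_rise \<tau> q e\<close> is the first time
  after \<open>q\<close> at which \<open>\<tau>\<close> has increased by at least \<open>e\<close>.\<close>

definition first_zero :: "(real \<Rightarrow> real) \<Rightarrow> real \<Rightarrow> ereal" where
  "first_zero f a = Inf (ereal ` {S. 0 \<le> S \<and> f (a + S) \<le> 0})"

definition first_rise :: "(real \<Rightarrow> real) \<Rightarrow> real \<Rightarrow> ereal \<Rightarrow> ereal" where
  "first_rise \<tau> q e = Inf (ereal ` {t. q \<le> t \<and> e \<le> ereal (\<tau> t - \<tau> q)})"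

definition passage_time :: "(real \<Rightarrow> real) \<Rightarrow> (real \<Rightarrow> real) \<Rightarrow> ereal" where
  "passage_time f \<tau> = Inf (ereal ` {t. 0 \<le> t \<and> f (\<tau> t) \<le> 0})"

definition stopped :: "(real \<Rightarrow> real) \<Rightarrow> (real \<Rightarrow> real) \<Rightarrow> ereal \<Rightarrow> bool" where
  "stopped f \<tau> p \<longleftrightarrow> p = \<infinity> \<or> f (\<tau> (real_of_ereal p)) \<le> 0"

primrec passage_seq :: "(real \<Rightarrow> real) \<Rightarrow> (real \<Rightarrow> real) \<Rightarrow> nat \<Rightarrow> ereal" where
  "passage_seq f \<tau> 0 = first_rise \<tau> 0 (first_zero f 0)"
| "passage_seq f \<tau> (Suc n) =
     (if stopped f \<tau> (passage_seq f \<tau> n) then passage_seq f \<tau> n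
      else first_rise \<tau> (real_of_ereal (passage_seq f \<tau> n))
             (first_zero f (\<tau> (real_of_ereal (passage_seq f \<tau> n)))))"

lemma tstar_seq_eq_passage_seq:
  assumes "T 0 \<omega> = 0"
  shows "tstar_seq W T \<beta> x0 \<omega> n = passage_seq (drifted_BM W \<beta> x0 \<omega>) (\<lambda>t. T t \<omega>) n"
  by (induction n) (simp_all add: assms Tstar_def first_rise_def first_zero_def drifted_BM_def
      tstar_step_def stopped_def lsbm_def Let_def)

lemma first_passage_eq_passage_time:
  "first_passage W T \<beta> x0 \<omega> = passage_time (drifted_BM W \<beta> x0 \<omega>) (\<lambda>t. T t \<omega>)"
  by (simp add: first_passage_def passage_time_def lsbm_def)

text \<open>Both infima in the recursion are attained as soon as they are finite: for
  \<open>first_rise\<close> by monotonicity and right-continuity, for \<open>first_zero\<close> because the zero set of a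
  continuous function is closed.\<close>

lemma nonempty_if_ereal_Inf_finite: "Inf (ereal ` A) \<noteq> \<infinity> \<Longrightarrow> A \<noteq> {}"
  by (auto simp: top_ereal_def)

lemma first_rise_attained:
  fixes \<tau> :: "real \<Rightarrow> real"
  assumes mono: "mono_on {q..} \<tau>" and rc: "\<forall>t\<ge>q. continuous (at_right t) \<tau>"
    and finite: "first_rise \<tau> q e \<noteq> \<infinity>"
  obtains u where "first_rise \<tau> q e = ereal u" "q \<le> u" "e \<le> ereal (\<tau> u - \<tau> q)"
proof -
  define B where "B = {t. q \<le> t \<and> e \<le> ereal (\<tau> t - \<tau> q)}"
  have neB: "B \<noteq> {}"
    using finite nonempty_if_ereal_Inf_finite unfolding first_rise_def B_def by blast
  have bdd: "bdd_below B" unfolding B_def by (rule bdd_belowI[of _ q]) auto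
  define u where "u = Inf B"
  have Inf_eq: "first_rise \<tau> q e = ereal u"
    unfolding first_rise_def u_def B_def[symmetric] using ereal_Inf'[OF bdd neB] by simp
  have qu: "q \<le> u" unfolding u_def using neB by (intro cInf_greatest) (auto simp: B_def)
  have "e \<le> ereal (\<tau> u - \<tau> q)"
  proof (cases e)
    case (real c)
    text \<open>Every time after \<open>u\<close> is beyond some element of \<open>B\<close>, so the rise is at least
      \<open>c\<close> there; right-continuity carries this back to \<open>u\<close>.\<close>
    have "c \<le> \<tau> t - \<tau> q" if "u < t" for t
    proof -
      obtain b where b: "b \<in> B" "b < t" using cInf_less_iff[OF neB bdd] \<open>u < t\<close> u_def by auto
      have "\<tau> b \<le> \<tau> t" using b that qu unfolding B_def by (intro mono_onD[OF mono]) auto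
      moreover have "c \<le> \<tau> b - \<tau> q" using b real unfolding B_def by auto
      ultimately show ?thesis by simp
    qed
    then have ev: "eventually (\<lambda>t. c \<le> \<tau> t - \<tau> q) (at_right u)"
      by (simp add: eventually_mono[OF eventually_at_right_less])
    have "((\<lambda>t. \<tau> t - \<tau> q) \<longlongrightarrow> \<tau> u - \<tau> q) (at_right u)"
      using rc qu by (intro tendsto_intros) (simp add: continuous_within)
    then have "c \<le> \<tau> u - \<tau> q" by (rule tendsto_lowerbound[OF _ ev]) simp
    then show ?thesis using real by simp
  next
    case PInf then show ?thesis using neB by (auto simp: B_def)
  next
    case MInf then show ?thesis by simp
  qed
  then show thesis using that Inf_eq qu by blast
qed

lemma first_zero_attained:
  fixes f :: "real \<Rightarrow> real"
  assumes cont: "continuous_on {a..} f" and finite: "first_zero f a \<noteq> \<infinity>"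
  obtains s where "first_zero f a = ereal s" "0 \<le> s" "f (a + s) \<le> 0"
proof -
  define A where "A = {S. 0 \<le> S \<and> f (a + S) \<le> 0}"
  have neA: "A \<noteq> {}"
    using finite nonempty_if_ereal_Inf_finite unfolding first_zero_def A_def by blast
  have "continuous_on {0..} (\<lambda>S. f (a + S))"
    by (rule continuous_on_compose2[OF cont]) (auto intro!: continuous_intros)
  then have "closed A"
    unfolding A_def using continuous_on_closed_Collect_le[of "{0..}" _ "\<lambda>_. 0"] by auto
  moreover have bdd: "bdd_below A" unfolding A_def by (rule bdd_belowI[of _ 0]) auto
  ultimately have "Inf A \<in> A" using closed_contains_Inf neA by blast
  moreover have "first_zero f a = ereal (Inf A)"
    unfolding first_zero_def A_def[symmetric] using ereal_Inf'[OF bdd neA] by simp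
  ultimately show thesis using that unfolding A_def by blast
qed

text \<open>For
  nondecreasing \<open>\<tau>\<close> and \<open>r\<close> inside a jump of \<open>\<tau>\<close>, this is the left limit of \<open>\<tau>\<close> at the
  jump, so countably many values of \<open>r\<close> capture every left limit at a jump.\<close>

definition rat_sup_below :: "(real \<Rightarrow> real) \<Rightarrow> real \<Rightarrow> real" where
  "rat_sup_below \<tau> r = Sup (insert 0 {\<tau> (real_of_rat q) | q. 0 \<le> q \<and> \<tau> (real_of_rat q) \<le> r})"

lemma rat_sup_below_at_jump:
  fixes \<tau> :: "real \<Rightarrow> real" and q :: "nat \<Rightarrow> real"
  assumes mono: "mono_on {0..} \<tau>" and start: "0 \<le> \<tau> 0"
    and q0: "\<And>n. 0 \<le> q n" and below: "\<And>n. q n < l" and approach: "\<And>t. t < l \<Longrightarrow> \<exists>n. t < q n"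
    and jump: "(SUP n. \<tau> (q n)) < \<tau> l"
  shows "\<exists>r::rat. rat_sup_below \<tau> (real_of_rat r) = (SUP n. \<tau> (q n))"
proof -
  define Z where "Z = (SUP n. \<tau> (q n))"
  have l0: "0 \<le> l" using q0[of 0] below[of 0] by simp
  have tmono: "\<tau> s \<le> \<tau> t" if "0 \<le> s" "s \<le> t" for s t
    using mono_onD[OF mono] that by auto
  have bdd: "bdd_above (range (\<lambda>n. \<tau> (q n)))"
    using q0 below by (intro bdd_aboveI[of _ "\<tau> l"]) (auto intro: tmono less_imp_le)
  have Zge: "\<tau> (q n) \<le> Z" for n unfolding Z_def using bdd by (auto intro: cSUP_upper)
  have Z0: "0 \<le> Z" using Zge[of 0] tmono[of 0 "q 0"] q0[of 0] start by simp
  obtain r where r: "r \<in> \<rat>" "Z < r" "r < \<tau> l" using Rats_dense_in_real jump Z_def by blast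
  then obtain rr where rr: "r = real_of_rat rr" by (auto elim: Rats_cases)
  define vals where "vals = {\<tau> (real_of_rat q) | q. 0 \<le> q \<and> \<tau> (real_of_rat q) \<le> r}"
  have bdd_vals: "bdd_above (insert 0 vals)"
    unfolding vals_def using r Z0 by (intro bdd_aboveI[of _ r]) auto
  have sup_eq: "rat_sup_below \<tau> r = Sup (insert 0 vals)" unfolding rat_sup_below_def vals_def ..
  text \<open>Values of \<open>\<tau>\<close> not exceeding \<open>r\<close> are taken before \<open>l\<close>, hence are at most \<open>Z\<close>.\<close>
  have small: "\<tau> t \<le> Z" if "0 \<le> t" "\<tau> t \<le> r" for t
  proof (cases "t < l")
    case True
    then obtain n where "t < q n" using approach by blast
    then show ?thesis using that tmono[of t "q n"] Zge[of n] by simp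
  next
    case False
    then have "\<tau> l \<le> \<tau> t" using l0 by (intro tmono) auto
    then show ?thesis using that r by simp
  qed
  have "rat_sup_below \<tau> r \<le> Z" unfolding sup_eq
    by (rule cSup_least) (auto simp: vals_def Z0 intro!: small)
  text \<open>Conversely, rational times between \<open>q n\<close> and \<open>l\<close> give values in \<open>[\<tau> (q n), Z]\<close>.\<close>
  moreover have "Z \<le> rat_sup_below \<tau> r" unfolding Z_def
  proof (rule cSUP_least)
    fix n
    obtain t where t: "t \<in> \<rat>" "q n < t" "t < l" using Rats_dense_in_real below by blast
    then obtain tt where tt: "t = real_of_rat tt" by (auto elim: Rats_cases)
    have t0: "0 \<le> t" using t q0[of n] by simp
    obtain m where "t < q m" using approach t by blast
    then have "\<tau> t \<le> Z" using tmono[of t "q m"] Zge[of m] t0 by simp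
    then have "\<tau> t \<in> vals" unfolding vals_def using r t0 tt by auto
    then have "\<tau> t \<le> Sup (insert 0 vals)" using bdd_vals by (auto intro: cSup_upper)
    moreover have "\<tau> (q n) \<le> \<tau> t" using t q0[of n] by (intro tmono) auto
    ultimately show "\<tau> (q n) \<le> rat_sup_below \<tau> r" unfolding sup_eq by simp
  qed simp
  ultimately show ?thesis using rr Z_def by auto
qed

text \<open>The genericity condition on a pair of paths needed for convergence: \<open>f\<close> does not
  vanish at any of the countably many values \<open>rat_sup_below \<tau> r\<close>.\<close>

definition jump_avoiding :: "(real \<Rightarrow> real) \<Rightarrow> (real \<Rightarrow> real) \<Rightarrow> bool" where
  "jump_avoiding f \<tau> \<longleftrightarrow> (\<forall>r::rat. f (rat_sup_below \<tau> (real_of_rat r)) \<noteq> 0)"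

locale time_changed_path =
  fixes f \<tau> :: "real \<Rightarrow> real"
  assumes f_cont: "continuous_on {0..} f"
    and \<tau>_zero: "\<tau> 0 = 0" and \<tau>_mono: "mono_on {0..} \<tau>"
    and \<tau>_right_cont: "\<forall>t\<ge>0. continuous (at_right t) \<tau>"
begin

lemma \<tau>_le: "0 \<le> s \<Longrightarrow> s \<le> t \<Longrightarrow> \<tau> s \<le> \<tau> t"
  using mono_onD[OF \<tau>_mono] by auto

lemma \<tau>_nonneg: "0 \<le> t \<Longrightarrow> 0 \<le> \<tau> t"
  using \<tau>_le[of 0 t] \<tau>_zero by simp

lemma passage_seq_invariant:
  "0 \<le> passage_seq f \<tau> n \<and> (\<forall>t. 0 \<le> t \<longrightarrow> ereal t < passage_seq f \<tau> n \<longrightarrow> 0 < f (\<tau> t))"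
proof (induction n)
  case 0
  have "0 \<le> passage_seq f \<tau> 0" by (auto simp: first_rise_def intro: Inf_greatest)
  moreover have "0 < f (\<tau> t)" if t: "0 \<le> t" "ereal t < passage_seq f \<tau> 0" for t
  proof (rule ccontr)
    assume "\<not> 0 < f (\<tau> t)"
    then have "first_zero f 0 \<le> ereal (\<tau> t)"
      using \<tau>_nonneg[OF t(1)] by (auto simp: first_zero_def intro: Inf_lower)
    then have "passage_seq f \<tau> 0 \<le> ereal t" using t \<tau>_zero by (auto simp: first_rise_def intro: Inf_lower)
    then show False using t by simp
  qed
  ultimately show ?case by blast
next
  case (Suc n)
  show ?case
  proof (cases "stopped f \<tau> (passage_seq f \<tau> n)")
    case True then show ?thesis using Suc by simp
  next
    case False
    define q where "q = real_of_ereal (passage_seq f \<tau> n)"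
    have pn: "passage_seq f \<tau> n = ereal q"
      using False Suc unfolding q_def stopped_def by (cases "passage_seq f \<tau> n") auto
    have q0: "0 \<le> q" using Suc pn by simp
    have step: "passage_seq f \<tau> (Suc n) = first_rise \<tau> q (first_zero f (\<tau> q))"
      using False q_def by simp
    have "0 \<le> passage_seq f \<tau> (Suc n)" unfolding step first_rise_def
      using q0 by (intro Inf_greatest) auto
    moreover have "0 < f (\<tau> t)" if t: "0 \<le> t" "ereal t < passage_seq f \<tau> (Suc n)" for t
    proof (cases "t < q")
      case True then show ?thesis using Suc t pn by auto
    next
      case False
      have "\<not> first_zero f (\<tau> q) \<le> ereal (\<tau> t - \<tau> q)"
      proof
        assume "first_zero f (\<tau> q) \<le> ereal (\<tau> t - \<tau> q)"
        then have "passage_seq f \<tau> (Suc n) \<le> ereal t"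
          unfolding step first_rise_def using False by (auto intro: Inf_lower)
        then show False using t by simp
      qed
      moreover have "\<tau> q \<le> \<tau> t" using False q0 by (intro \<tau>_le) auto
      ultimately show ?thesis
        unfolding first_zero_def by (auto intro!: Inf_lower simp: not_less)
    qed
    ultimately show ?thesis by blast
  qed
qed

lemma passage_seq_unstopped_step:
  assumes "\<not> stopped f \<tau> (passage_seq f \<tau> n)"
  obtains q where "passage_seq f \<tau> n = ereal q" "0 \<le> q" "0 < f (\<tau> q)"
    and "passage_seq f \<tau> (Suc n) = first_rise \<tau> q (first_zero f (\<tau> q))"
proof -
  define q where "q = real_of_ereal (passage_seq f \<tau> n)"
  have pn: "passage_seq f \<tau> n = ereal q"
    using assms passage_seq_invariant[of n] unfolding q_def stopped_def
    by (cases "passage_seq f \<tau> n") auto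
  moreover have "0 \<le> q" using passage_seq_invariant[of n] pn by simp
  moreover have "0 < f (\<tau> q)" using assms unfolding q_def stopped_def by simp
  moreover have "passage_seq f \<tau> (Suc n) = first_rise \<tau> q (first_zero f (\<tau> q))"
    using assms unfolding q_def by simp
  ultimately show thesis using that by blast
qed

lemma passage_seq_incseq: "incseq (passage_seq f \<tau>)"
proof (rule incseq_SucI)
  fix n
  show "passage_seq f \<tau> n \<le> passage_seq f \<tau> (Suc n)"
  proof (cases "stopped f \<tau> (passage_seq f \<tau> n)")
    case False
    then obtain q where "passage_seq f \<tau> n = ereal q"
      and "passage_seq f \<tau> (Suc n) = first_rise \<tau> q (first_zero f (\<tau> q))"
      by (rule passage_seq_unstopped_step)
    then show ?thesis by (auto simp: first_rise_def intro: Inf_greatest)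
  qed simp
qed

lemma passage_seq_le_passage_time: "passage_seq f \<tau> n \<le> passage_time f \<tau>"
  unfolding passage_time_def
proof (rule Inf_greatest)
  fix x assume "x \<in> ereal ` {t. 0 \<le> t \<and> f (\<tau> t) \<le> 0}"
  then obtain t where "x = ereal t" "0 \<le> t" "f (\<tau> t) \<le> 0" by blast
  then show "passage_seq f \<tau> n \<le> x"
    using passage_seq_invariant[of n] by (meson linorder_not_less)
qed

lemma passage_seq_stopped_limit:
  assumes "stopped f \<tau> (passage_seq f \<tau> n)"
  shows "passage_seq f \<tau> \<longlonglongrightarrow> passage_time f \<tau>"
proof -
  have const: "passage_seq f \<tau> m = passage_seq f \<tau> n" if "n \<le> m" for m
    using that by (induction m rule: dec_induct) (simp_all add: assms)
  have reached: "passage_seq f \<tau> n = passage_time f \<tau>"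
  proof (cases "passage_seq f \<tau> n = \<infinity>")
    case False
    define q where "q = real_of_ereal (passage_seq f \<tau> n)"
    have pn: "passage_seq f \<tau> n = ereal q"
      using False passage_seq_invariant[of n] unfolding q_def by (cases "passage_seq f \<tau> n") auto
    have "0 \<le> q" using passage_seq_invariant[of n] pn by simp
    moreover have "f (\<tau> q) \<le> 0" using assms False unfolding stopped_def q_def by simp
    ultimately have "q \<in> {t. 0 \<le> t \<and> f (\<tau> t) \<le> 0}" by simp
    then have "passage_time f \<tau> \<le> ereal q" unfolding passage_time_def by (rule Inf_lower[OF imageI])
    then show ?thesis using passage_seq_le_passage_time[of n] pn by simp
  qed (use passage_seq_le_passage_time[of n] in simp)
  have "eventually (\<lambda>m. passage_seq f \<tau> m = passage_time f \<tau>) sequentially"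
    unfolding eventually_sequentially using const reached by auto
  then show ?thesis by (rule tendsto_eventually)
qed

lemma zero_between_steps:
  assumes unst: "\<not> stopped f \<tau> (passage_seq f \<tau> n)"
    and pn: "passage_seq f \<tau> n = ereal q" and pSn: "passage_seq f \<tau> (Suc n) = ereal u"
  obtains S where "\<tau> q \<le> S" "S \<le> \<tau> u" "f S \<le> 0"
proof -
  obtain q' where "passage_seq f \<tau> n = ereal q'" and q0: "0 \<le> q'"
    and step: "passage_seq f \<tau> (Suc n) = first_rise \<tau> q' (first_zero f (\<tau> q'))"
    using passage_seq_unstopped_step[OF unst] by blast
  with pn have "q' = q" by simp
  with q0 step pSn have q0: "0 \<le> q" and rise: "first_rise \<tau> q (first_zero f (\<tau> q)) = ereal u"
    by simp_all
  have "mono_on {q..} \<tau>" using q0 by (intro mono_onI \<tau>_le) auto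
  moreover have "\<forall>t\<ge>q. continuous (at_right t) \<tau>" using q0 \<tau>_right_cont by auto
  moreover have "first_rise \<tau> q (first_zero f (\<tau> q)) \<noteq> \<infinity>" using rise by simp
  ultimately obtain u' where "first_rise \<tau> q (first_zero f (\<tau> q)) = ereal u'"
    and reach: "first_zero f (\<tau> q) \<le> ereal (\<tau> u' - \<tau> q)"
    by (rule first_rise_attained)
  with rise have reach: "first_zero f (\<tau> q) \<le> ereal (\<tau> u - \<tau> q)" by simp
  have "continuous_on {\<tau> q..} f"
    using f_cont by (rule continuous_on_subset) (use \<tau>_nonneg[OF q0] in auto)
  moreover have "first_zero f (\<tau> q) \<noteq> \<infinity>" using reach by auto
  ultimately obtain s where "first_zero f (\<tau> q) = ereal s" "0 \<le> s" "f (\<tau> q + s) \<le> 0"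
    by (rule first_zero_attained)
  with reach show thesis using that[of "\<tau> q + s"] by simp
qed

text \<open>If the sequence never stops and stays bounded, the path vanishes at the left limit
  of \<open>\<tau>\<close> at the limit time: it is squeezed between positive values at the times of the
  sequence and nonpositive values at the zeros found in between.\<close>

lemma unstopped_left_limit_zero:
  assumes unst: "\<And>n. \<not> stopped f \<tau> (passage_seq f \<tau> n)"
    and q: "\<And>n. passage_seq f \<tau> n = ereal (q n)" and bdd: "bdd_above (range q)"
  shows "f (SUP n. \<tau> (q n)) = 0"
proof -
  have q0: "0 \<le> q n" and fq: "0 < f (\<tau> (q n))" for n
    using passage_seq_unstopped_step[OF unst, of n] q[of n] by auto
  have qinc: "incseq q" using passage_seq_incseq q by (simp add: incseq_def)
  obtain l where ql: "\<And>n. q n \<le> l" using bdd by (auto simp: bdd_above_def)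
  have "\<exists>S. \<tau> (q n) \<le> S \<and> S \<le> \<tau> (q (Suc n)) \<and> f S \<le> 0" for n
  proof -
    obtain S where "\<tau> (q n) \<le> S" "S \<le> \<tau> (q (Suc n))" "f S \<le> 0"
      by (rule zero_between_steps[OF unst q q])
    then show ?thesis by blast
  qed
  then obtain S where S: "\<And>n. \<tau> (q n) \<le> S n" "\<And>n. S n \<le> \<tau> (q (Suc n))" "\<And>n. f (S n) \<le> 0"
    by metis
  define Z where "Z = (SUP n. \<tau> (q n))"
  have "bdd_above (range (\<lambda>n. \<tau> (q n)))"
    using ql q0 by (intro bdd_aboveI[of _ "\<tau> l"]) (auto intro: \<tau>_le)
  moreover have "incseq (\<lambda>n. \<tau> (q n))" using qinc q0 by (auto simp: incseq_def intro: \<tau>_le)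
  ultimately have limZ: "(\<lambda>n. \<tau> (q n)) \<longlonglongrightarrow> Z" unfolding Z_def by (rule LIMSEQ_incseq_SUP)
  have limS: "S \<longlonglongrightarrow> Z"
    using limZ LIMSEQ_Suc[OF limZ] S(1,2)
    by (intro tendsto_sandwich[of "\<lambda>n. \<tau> (q n)" S _ "\<lambda>n. \<tau> (q (Suc n))"]) auto
  have Z0: "0 \<le> Z" using LIMSEQ_le_const[OF limZ] \<tau>_nonneg q0 by blast
  have S0: "0 \<le> S n" for n using S(1) \<tau>_nonneg q0 by (meson order_trans)
  have "(\<lambda>n. f (S n)) \<longlonglongrightarrow> f Z"
    using continuous_on_tendsto_compose[OF f_cont limS] Z0 S0 by auto
  then have "f Z \<le> 0" using S(3) by (intro LIMSEQ_le_const2) auto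
  moreover have "(\<lambda>n. f (\<tau> (q n))) \<longlonglongrightarrow> f Z"
    using continuous_on_tendsto_compose[OF f_cont limZ] Z0 \<tau>_nonneg q0 by auto
  then have "0 \<le> f Z" using fq by (intro LIMSEQ_le_const) (auto intro: less_imp_le)
  ultimately show ?thesis unfolding Z_def by simp
qed

text \<open>At a finite limit \<open>l\<close> of a never-stopping sequence the time-changed path is zero:
  if \<open>\<tau>\<close> were to jump at \<open>l\<close>, its left limit, where \<open>f\<close> vanishes, would be one of the
  values excluded by \<open>jump_avoiding\<close>.\<close>

lemma unstopped_finite_limit_zero:
  assumes unst: "\<And>n. \<not> stopped f \<tau> (passage_seq f \<tau> n)" and avoid: "jump_avoiding f \<tau>"
    and q: "\<And>n. passage_seq f \<tau> n = ereal (q n)" and ql: "\<And>n. q n \<le> l"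
    and approach: "\<And>t. t < l \<Longrightarrow> \<exists>n. t < q n"
  shows "f (\<tau> l) \<le> 0"
proof -
  have q0: "0 \<le> q n" for n using passage_seq_invariant[of n] q[of n] by simp
  define Z where "Z = (SUP n. \<tau> (q n))"
  have "bdd_above (range q)" by (intro bdd_aboveI[of _ l]) (auto simp: ql)
  then have fZ: "f Z = 0" unfolding Z_def by (rule unstopped_left_limit_zero[OF unst q])
  have tbdd: "bdd_above (range (\<lambda>n. \<tau> (q n)))"
    by (intro bdd_aboveI[of _ "\<tau> l"]) (auto intro: \<tau>_le q0 ql)
  have Zge: "\<tau> (q n) \<le> Z" for n unfolding Z_def using tbdd by (intro cSUP_upper) auto
  have "Z \<le> \<tau> l" unfolding Z_def using ql q0 by (auto intro!: cSUP_least \<tau>_le)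
  moreover have "\<not> Z < \<tau> l"
  proof
    assume jump: "Z < \<tau> l"
    have below: "q n < l" for n
      using ql[of n] jump Zge[of n] by (cases "q n = l") auto
    obtain r :: rat where "rat_sup_below \<tau> (real_of_rat r) = Z"
      using rat_sup_below_at_jump[OF \<tau>_mono _ q0 below approach] jump \<tau>_zero
      unfolding Z_def by auto
    then show False using avoid fZ unfolding jump_avoiding_def by auto
  qed
  ultimately show ?thesis using fZ by simp
qed

lemma passage_seq_unstopped_limit:
  assumes unst: "\<And>n. \<not> stopped f \<tau> (passage_seq f \<tau> n)" and avoid: "jump_avoiding f \<tau>"
  shows "passage_seq f \<tau> \<longlonglongrightarrow> passage_time f \<tau>"
proof -
  define L where "L = (SUP n. passage_seq f \<tau> n)"
  have lim: "passage_seq f \<tau> \<longlonglongrightarrow> L" unfolding L_def by (rule LIMSEQ_SUP[OF passage_seq_incseq])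
  have "L \<le> passage_time f \<tau>" unfolding L_def by (rule SUP_least[OF passage_seq_le_passage_time])
  moreover have "passage_time f \<tau> \<le> L"
  proof (cases "L = \<infinity>")
    case False
    define q where "q n = real_of_ereal (passage_seq f \<tau> n)" for n
    have q: "passage_seq f \<tau> n = ereal (q n)" and q0: "0 \<le> q n" for n
      using passage_seq_unstopped_step[OF unst, of n] unfolding q_def by (metis real_of_ereal.simps(1))+
    have "passage_seq f \<tau> 0 \<le> L" unfolding L_def by (rule SUP_upper) simp
    then obtain l where l: "L = ereal l" using False q[of 0] by (cases L) auto
    have ql: "q n \<le> l" for n
      using SUP_upper[of n UNIV "passage_seq f \<tau>"] q[of n] l unfolding L_def by simp
    have approach: "\<exists>n. t < q n" if "t < l" for t
    proof -
      have "ereal t < (SUP n. passage_seq f \<tau> n)" using that l L_def by simp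
      then show ?thesis using q by (auto simp: less_SUP_iff)
    qed
    have "f (\<tau> l) \<le> 0" by (rule unstopped_finite_limit_zero[OF unst avoid q ql approach])
    moreover have "0 \<le> l" using q0[of 0] ql[of 0] by simp
    ultimately have "passage_time f \<tau> \<le> ereal l"
      unfolding passage_time_def by (intro Inf_lower) auto
    then show ?thesis using l by simp
  qed simp
  ultimately show ?thesis using lim by simp
qed

theorem passage_seq_tendsto:
  assumes "jump_avoiding f \<tau>"
  shows "passage_seq f \<tau> \<longlonglongrightarrow> passage_time f \<tau>"
  using passage_seq_stopped_limit passage_seq_unstopped_limit[OF _ assms] by blast

end

text \<open>Paths are random elements of the product space of real functions
  on \<open>[0, \<infinity>)\<close>, the space in which independence of \<open>W\<close> and \<open>T\<close> is formulated.\<close>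

abbreviation path_space :: "(real \<Rightarrow> real) measure" where
  "path_space \<equiv> Pi\<^sub>M {0..} (\<lambda>_. borel)"

text \<open>Each \<open>rat_sup_below \<cdot> r\<close> is a nonnegative measurable functional of the path, since it
  only looks at countably many coordinates.\<close>

lemma rat_sup_below_nonneg: "0 \<le> rat_sup_below \<tau> r"
  unfolding rat_sup_below_def by (rule cSup_upper) (auto intro!: bdd_aboveI[of _ "max 0 r"])

lemma rat_sup_below_measurable: "(\<lambda>w. rat_sup_below w r) \<in> borel_measurable path_space"
proof (subst borel_measurable_iff_le, intro allI)
  fix a
  have le_iff: "rat_sup_below w r \<le> a \<longleftrightarrow>
      0 \<le> a \<and> (\<forall>q::rat. 0 \<le> q \<longrightarrow> w (real_of_rat q) \<le> r \<longrightarrow> w (real_of_rat q) \<le> a)" for w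
  proof -
    have "bdd_above (insert 0 {w (real_of_rat q) | q. 0 \<le> q \<and> w (real_of_rat q) \<le> r})"
      by (intro bdd_aboveI[of _ "max 0 r"]) auto
    then show ?thesis unfolding rat_sup_below_def by (subst cSup_le_iff) auto
  qed
  have eval: "(\<lambda>w. w (real_of_rat q)) \<in> borel_measurable path_space" if "0 \<le> q" for q :: rat
    by (rule measurable_component_singleton) (simp add: that)
  have "Measurable.pred path_space (\<lambda>w. 0 \<le> a \<and>
      (\<forall>q::rat. 0 \<le> q \<longrightarrow> w (real_of_rat q) \<le> r \<longrightarrow> w (real_of_rat q) \<le> a))"
    by (intro pred_intros_countable pred_intros_conj1' pred_intros_imp' pred_intros_logic(4))
      (auto simp: pred_def intro!: borel_measurable_le eval)
  then show "{w \<in> space path_space. rat_sup_below w r \<le> a} \<in> sets path_space"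
    unfolding le_iff pred_def by simp
qed

lemma LIMSEQ_inverse_Suc_bound:
  fixes u :: "nat \<Rightarrow> real"
  assumes "\<And>n. \<bar>u n - c\<bar> < inverse (Suc n)"
  shows "u \<longlonglongrightarrow> c"
proof (rule tendsto_sandwich[of "\<lambda>n. c - inverse (Suc n)" _ _ "\<lambda>n. c + inverse (Suc n)"])
  have "c - inverse (Suc n) \<le> u n \<and> u n \<le> c + inverse (Suc n)" for n
    using assms[of n] unfolding abs_less_iff by linarith
  then show "\<forall>\<^sub>F n in sequentially. c - inverse (Suc n) \<le> u n"
    "\<forall>\<^sub>F n in sequentially. u n \<le> c + inverse (Suc n)"
    by (auto intro: always_eventually)
  show "(\<lambda>n. c - inverse (Suc n)) \<longlonglongrightarrow> c" "(\<lambda>n. c + inverse (Suc n)) \<longlonglongrightarrow> c"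
    using tendsto_diff[OF tendsto_const LIMSEQ_inverse_real_of_nat]
      tendsto_add[OF tendsto_const LIMSEQ_inverse_real_of_nat] by simp_all
qed

text \<open>Evaluation of a path at a random time is not measurable in the product \<open>\<sigma>\<close>-algebra in
  general; for continuous paths, vanishing at \<open>y\<close> can instead be detected through rational
  times close to \<open>y\<close>, which is a countable and hence measurable condition.\<close>

definition rat_zero_test :: "(real \<Rightarrow> real) \<Rightarrow> real \<Rightarrow> bool" where
  "rat_zero_test F y \<longleftrightarrow> (\<forall>n::nat. \<exists>q::rat. 0 \<le> q \<and>
     \<bar>real_of_rat q - y\<bar> < inverse (Suc n) \<and> \<bar>F (real_of_rat q)\<bar> < inverse (Suc n))"

lemma rat_zero_test_iff:
  fixes F :: "real \<Rightarrow> real"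
  assumes cont: "continuous_on {0..} F" and y: "0 \<le> y"
  shows "rat_zero_test F y \<longleftrightarrow> F y = 0"
proof
  assume "rat_zero_test F y"
  then obtain qs :: "nat \<Rightarrow> rat" where qs: "\<And>n. 0 \<le> qs n"
      "\<And>n. \<bar>real_of_rat (qs n) - y\<bar> < inverse (Suc n)"
      "\<And>n. \<bar>F (real_of_rat (qs n))\<bar> < inverse (Suc n)"
    unfolding rat_zero_test_def by metis
  have "(\<lambda>n. real_of_rat (qs n)) \<longlonglongrightarrow> y" by (rule LIMSEQ_inverse_Suc_bound) (use qs(2) in auto)
  moreover have "\<forall>\<^sub>F n in sequentially. real_of_rat (qs n) \<in> {0..}" using qs(1) by simp
  ultimately have "(\<lambda>n. F (real_of_rat (qs n))) \<longlonglongrightarrow> F y"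
    using y by (intro continuous_on_tendsto_compose[OF cont]) auto
  moreover have "(\<lambda>n. F (real_of_rat (qs n))) \<longlonglongrightarrow> 0" by (rule LIMSEQ_inverse_Suc_bound) (use qs(3) in auto)
  ultimately show "F y = 0" by (rule LIMSEQ_unique)
next
  assume Fy: "F y = 0"
  show "rat_zero_test F y" unfolding rat_zero_test_def
  proof
    fix n :: nat
    define e :: real where "e = inverse (Suc n)"
    have e0: "0 < e" unfolding e_def by simp
    obtain d where d: "d > 0" "\<And>x. 0 \<le> x \<Longrightarrow> dist x y < d \<Longrightarrow> dist (F x) (F y) < e"
      using cont y e0 unfolding continuous_on_iff by (meson atLeast_iff)
    obtain t where t: "t \<in> \<rat>" "y < t" "t < y + min d e"
      using Rats_dense_in_real[of y "y + min d e"] d e0 by auto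
    then obtain q where q: "t = real_of_rat q" by (auto elim: Rats_cases)
    have "\<bar>F t\<bar> < e" using d(2)[of t] t y Fy by (simp add: dist_real_def)
    moreover have "\<bar>t - y\<bar> < e" using t by simp
    moreover have "0 \<le> q"
    proof -
      have "0 \<le> real_of_rat q" using t y q by linarith
      then show ?thesis by simp
    qed
    ultimately show "\<exists>q::rat. 0 \<le> q \<and> \<bar>real_of_rat q - y\<bar> < inverse (Suc n) \<and>
        \<bar>F (real_of_rat q)\<bar> < inverse (Suc n)" using q e_def by blast
  qed
qed

lemma rat_zero_test_measurable:
  assumes h: "h \<in> borel_measurable N"
  shows "Measurable.pred (path_space \<Otimes>\<^sub>M N)
    (\<lambda>z. rat_zero_test (\<lambda>s. x0 + fst z s + \<beta> * s) (h (snd z)))"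
proof -
  have eval: "(\<lambda>z. fst z (real_of_rat q)) \<in> borel_measurable (path_space \<Otimes>\<^sub>M N)" if "0 \<le> q"
    for q :: rat
    by (rule measurable_compose[OF measurable_fst measurable_component_singleton]) (simp add: that)
  have time: "(\<lambda>z. h (snd z)) \<in> borel_measurable (path_space \<Otimes>\<^sub>M N)"
    by (rule measurable_compose[OF measurable_snd h])
  show ?thesis unfolding rat_zero_test_def
    by (intro pred_intros_countable pred_intros_conj1' pred_intros_logic(3))
      (auto simp: pred_def intro!: borel_measurable_less borel_measurable_abs borel_measurable_add
        borel_measurable_diff eval time)
qed

text \<open>At a fixed time \<open>y \<ge> 0\<close> the drifted Brownian motion started at \<open>x0 \<noteq> 0\<close> vanishes
  with probability zero: for \<open>y > 0\<close> its position has a Gaussian density.\<close>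

lemma drifted_BM_fixed_time_null:
  assumes BM: "std_brownian_motion M W" and x0: "x0 \<noteq> 0" and y: "0 \<le> y"
  shows "emeasure M {\<omega> \<in> space M. x0 + W y \<omega> + \<beta> * y = 0} = 0"
proof (cases "y = 0")
  case True
  then have "{\<omega> \<in> space M. x0 + W y \<omega> + \<beta> * y = 0} = {}"
    using BM x0 by (auto simp: std_brownian_motion_def)
  then show ?thesis by (metis emeasure_empty)
next
  case False
  define X where "X \<omega> = W y \<omega> - W 0 \<omega>" for \<omega>
  define dens where "dens x = ennreal (normal_density 0 (sqrt (y - 0)) x)" for x
  have "distributed M lborel X dens"
    using BM False y unfolding std_brownian_motion_def X_def dens_def by auto
  then have X: "X \<in> measurable M lborel" and distr_X: "distr M lborel X = density lborel dens"
    and dens: "dens \<in> borel_measurable lborel"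
    unfolding distributed_def by auto
  define c where "c = - x0 - \<beta> * y"
  have "{\<omega> \<in> space M. x0 + W y \<omega> + \<beta> * y = 0} = X -` {c} \<inter> space M"
    using BM by (auto simp: std_brownian_motion_def X_def c_def)
  also have "emeasure M \<dots> = emeasure (density lborel dens) {c}"
    unfolding distr_X[symmetric] by (rule emeasure_distr[symmetric, OF X]) simp
  also have "\<dots> = 0"
  proof -
    have "{c} \<in> null_sets lborel" by (simp add: null_sets_def)
    then have "AE x in lborel. x \<in> {c} \<longrightarrow> dens x = 0" by (rule AE_I') auto
    then have "{c} \<in> null_sets (density lborel dens)" using null_sets_density_iff[OF dens] by simp
    then show ?thesis by auto
  qed
  finally show ?thesis .
qed

lemma drifted_BM_path_continuous:
  assumes BM: "std_brownian_motion M W" and \<omega>: "\<omega> \<in> space M"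
  shows "continuous_on {0..} (\<lambda>s. x0 + (\<lambda>t\<in>{0..}. W t \<omega>) s + \<beta> * s)"
proof -
  have "continuous_on {0..} (\<lambda>s. x0 + W s \<omega> + \<beta> * s)"
    using BM \<omega> by (intro continuous_intros) (auto simp: std_brownian_motion_def)
  then show ?thesis by (rule continuous_on_cong[THEN iffD1, rotated 2]) auto
qed

text \<open>If the event is not even measurable in the product \<open>\<sigma>\<close>-algebra its
  measure is zero by convention, so no measurability argument is needed here.\<close>

lemma drifted_BM_paths_vanishing_null:
  assumes BM: "std_brownian_motion M W" and x0: "x0 \<noteq> 0" and y: "0 \<le> y"
  shows "emeasure (distr M path_space (\<lambda>\<omega>. \<lambda>t\<in>{0..}. W t \<omega>))
           {w \<in> space path_space. rat_zero_test (\<lambda>s. x0 + w s + \<beta> * s) y} = 0"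
    (is "emeasure (distr M path_space ?Wp) ?S = 0")
proof (cases "?S \<in> sets path_space")
  case True
  have Wp: "?Wp \<in> M \<rightarrow>\<^sub>M path_space"
    using BM by (intro measurable_restrict) (simp add: std_brownian_motion_def)
  have sub: "?Wp -` ?S \<inter> space M \<subseteq> {\<omega> \<in> space M. x0 + W y \<omega> + \<beta> * y = 0}"
    using rat_zero_test_iff[OF drifted_BM_path_continuous[OF BM] y] y by auto
  have "{\<omega> \<in> space M. x0 + W y \<omega> + \<beta> * y = 0} \<in> sets M"
    using BM y by (auto simp: std_brownian_motion_def)
  from emeasure_mono[OF sub this] have "emeasure M (?Wp -` ?S \<inter> space M) = 0"
    unfolding drifted_BM_fixed_time_null[OF BM x0 y] by simp
  then show ?thesis by (simp add: emeasure_distr[OF Wp True])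
qed (simp add: emeasure_notin_sets)

lemma drifted_BM_at_independent_time:
  fixes M :: "'a measure" and W :: "real \<Rightarrow> 'a \<Rightarrow> real" and V :: "'a \<Rightarrow> real \<Rightarrow> real"
  assumes BM: "std_brownian_motion M W" and x0: "x0 \<noteq> 0"
    and indep: "prob_space.indep_var M path_space (\<lambda>\<omega>. \<lambda>t\<in>{0..}. W t \<omega>) N V"
    and h: "h \<in> borel_measurable N" and h0: "\<And>v. v \<in> space N \<Longrightarrow> 0 \<le> h v"
  shows "AE \<omega> in M. drifted_BM W \<beta> x0 \<omega> (h (V \<omega>)) \<noteq> 0"
proof -
  interpret prob_space M using BM by (simp add: std_brownian_motion_def)
  define Wp where "Wp \<omega> = (\<lambda>t\<in>{0..}. W t \<omega>)" for \<omega>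
  have Wp: "Wp \<in> M \<rightarrow>\<^sub>M path_space" and V: "V \<in> M \<rightarrow>\<^sub>M N"
    and distr_eq: "distr M path_space Wp \<Otimes>\<^sub>M distr M N V = distr M (path_space \<Otimes>\<^sub>M N) (\<lambda>\<omega>. (Wp \<omega>, V \<omega>))"
    using indep unfolding indep_var_distribution_eq Wp_def by auto
  define Z where "Z = {z \<in> space (path_space \<Otimes>\<^sub>M N).
    rat_zero_test (\<lambda>s. x0 + fst z s + \<beta> * s) (h (snd z))}"
  have Z: "Z \<in> sets (path_space \<Otimes>\<^sub>M N)"
    using rat_zero_test_measurable[OF h] unfolding Z_def pred_def by simp
  have slice: "emeasure (distr M path_space Wp) ((\<lambda>w. (w, v)) -` Z) = 0" if v: "v \<in> space N" for v
  proof -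
    have "(\<lambda>w. (w, v)) -` Z = {w \<in> space path_space. rat_zero_test (\<lambda>s. x0 + w s + \<beta> * s) (h v)}"
      using v by (auto simp: Z_def space_pair_measure)
    then show ?thesis
      unfolding Wp_def using drifted_BM_paths_vanishing_null[OF BM x0 h0[OF v]] by simp
  qed
  define E where "E = (\<lambda>\<omega>. (Wp \<omega>, V \<omega>)) -` Z \<inter> space M"
  have E: "E \<in> sets M" unfolding E_def by (rule measurable_sets[OF measurable_Pair[OF Wp V] Z])
  have psf: "pair_sigma_finite (distr M path_space Wp) (distr M N V)"
    unfolding pair_sigma_finite_def by (intro conjI prob_space_imp_sigma_finite prob_space_distr Wp V)
  text \<open>By independence, the probability of \<open>E\<close> is an integral of null slices (Fubini).\<close>
  have "emeasure M E = emeasure (distr M path_space Wp \<Otimes>\<^sub>M distr M N V) Z"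
    unfolding E_def distr_eq by (rule emeasure_distr[symmetric, OF measurable_Pair[OF Wp V] Z])
  also have "\<dots> = (\<integral>\<^sup>+ v. emeasure (distr M path_space Wp) ((\<lambda>w. (w, v)) -` Z) \<partial>distr M N V)"
    by (rule pair_sigma_finite.emeasure_pair_measure_alt2[OF psf]) (simp add: Z)
  also have "\<dots> = (\<integral>\<^sup>+ v. 0 \<partial>distr M N V)"
    by (rule nn_integral_cong) (simp add: slice)
  finally have "E \<in> null_sets M" using E by (simp add: null_sets_def)
  then show ?thesis
  proof (rule AE_I')
    show "{\<omega> \<in> space M. \<not> drifted_BM W \<beta> x0 \<omega> (h (V \<omega>)) \<noteq> 0} \<subseteq> E"
    proof
      fix \<omega> assume "\<omega> \<in> {\<omega> \<in> space M. \<not> drifted_BM W \<beta> x0 \<omega> (h (V \<omega>)) \<noteq> 0}"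
      then have \<omega>: "\<omega> \<in> space M" and zero: "drifted_BM W \<beta> x0 \<omega> (h (V \<omega>)) = 0" by auto
      have V\<omega>: "V \<omega> \<in> space N" using measurable_space[OF V \<omega>] .
      then have "rat_zero_test (\<lambda>s. x0 + Wp \<omega> s + \<beta> * s) (h (V \<omega>))"
        using rat_zero_test_iff[OF drifted_BM_path_continuous[OF BM \<omega>] h0[OF V\<omega>]] zero h0[OF V\<omega>]
        by (simp add: drifted_BM_def Wp_def)
      moreover have "Wp \<omega> \<in> space path_space" using measurable_space[OF Wp \<omega>] .
      ultimately show "\<omega> \<in> E" unfolding E_def Z_def using \<omega> V\<omega> by (simp add: space_pair_measure)
    qed
  qed
qed

lemma jump_avoiding_AE:
  assumes BM: "std_brownian_motion M W" and indep: "indep_processes M W T" and x0: "x0 \<noteq> 0"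
  shows "AE \<omega> in M. jump_avoiding (drifted_BM W \<beta> x0 \<omega>) (\<lambda>t. T t \<omega>)"
proof -
  text \<open>Only rational times \<open>\<ge> 0\<close> are inspected, so restricting \<open>T\<close> to \<open>[0, \<infinity>)\<close> changes nothing.\<close>
  have restrict: "rat_sup_below (\<lambda>t\<in>{0..}. T t \<omega>) r = rat_sup_below (\<lambda>t. T t \<omega>) r" for \<omega> r
  proof -
    have "{(\<lambda>t\<in>{0..}. T t \<omega>) (real_of_rat q) | q. 0 \<le> q \<and> (\<lambda>t\<in>{0..}. T t \<omega>) (real_of_rat q) \<le> r} =
          {T (real_of_rat q) \<omega> | q. 0 \<le> q \<and> T (real_of_rat q) \<omega> \<le> r}"
      by auto
    then show ?thesis unfolding rat_sup_below_def by simp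
  qed
  have "AE \<omega> in M. drifted_BM W \<beta> x0 \<omega> (rat_sup_below (\<lambda>t\<in>{0..}. T t \<omega>) (real_of_rat r)) \<noteq> 0"
    for r :: rat
    using indep unfolding indep_processes_def
    by (rule drifted_BM_at_independent_time[OF BM x0 _ rat_sup_below_measurable rat_sup_below_nonneg])
  then show ?thesis unfolding jump_avoiding_def restrict by (simp add: AE_all_countable)
qed

theorem theorem4p2:
  fixes M :: "'a measure" and W T :: "real \<Rightarrow> 'a \<Rightarrow> real" and \<beta> x0 :: real
  assumes "std_brownian_motion M W"
    and "subordinator M T"
    and "indep_processes M W T"
    and "x0 > 0"
  shows "AE \<omega> in M. (\<lambda>n. tstar_seq W T \<beta> x0 \<omega> n) \<longlonglongrightarrow> first_passage W T \<beta> x0 \<omega>"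
proof -
  have "AE \<omega> in M. jump_avoiding (drifted_BM W \<beta> x0 \<omega>) (\<lambda>t. T t \<omega>)"
    using jump_avoiding_AE[OF assms(1,3)] assms(4) by simp
  then show ?thesis
  proof (rule AE_mp, intro AE_I2 impI)
    fix \<omega> assume \<omega>: "\<omega> \<in> space M" and avoid: "jump_avoiding (drifted_BM W \<beta> x0 \<omega>) (\<lambda>t. T t \<omega>)"
    interpret time_changed_path "drifted_BM W \<beta> x0 \<omega>" "\<lambda>t. T t \<omega>"
      using assms(1,2) \<omega> by unfold_locales
        (auto simp: std_brownian_motion_def subordinator_def drifted_BM_def intro!: continuous_intros)
    show "(\<lambda>n. tstar_seq W T \<beta> x0 \<omega> n) \<longlonglongrightarrow> first_passage W T \<beta> x0 \<omega>"
      using passage_seq_tendsto[OF avoid]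
      by (simp add: tstar_seq_eq_passage_seq[where T=T and \<omega>=\<omega>, OF \<tau>_zero] first_passage_eq_passage_time)
  qed
qed

end
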